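(* Let $\Xi\subseteq\mathbb{R}^d$ be a Polish space with Borel $\sigma$-algebra, equipped with a norm $\|\cdot\|$, and let $\boldsymbol{\xi}_1,\boldsymbol{\xi}_2,\dots$ be independent $\Xi$-valued random variables, $\boldsymbol{\xi}_i$ having distribution $\mathbb{P}_i$. Let $\rho:\mathbb{R}_+\to\mathbb{R}_+$ with $\rho(0)=0$ satisfy $W(\mathbb{P}_i,\mathbb{P}_{i+k})\le\rho(k)$ for all $i\ge1$, $k\ge0$. Let $\mathcal{X}\subseteq\mathbb{R}^n$, $g:\mathbb{R}^n\times\mathbb{R}^d\to\mathbb{R}$ with $g(x,\cdot)$ measurable for every $x$, $N$ a positive integer, and $r_1,\dots,r_N>0$. For $i\in[N]$ let $U_{r_i}(\boldsymbol{\xi}_i):=\{u\in\Xi:\|u-\boldsymbol{\xi}_i\|\le r_i\}$. Then for every $x\in\mathcal{X}$ and every $i\in[N]$, $$\mathbb{P}\big(g(x,u)\le0\ \ \forall u\in U_{r_i}(\boldsymbol{\xi}_i)\big)\le\mathbb{P}\big(g(x,\boldsymbol{\xi}_{N+1})\le0\big)+\frac{\rho(N+1-i)}{r_i}.$$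
   Context: The 1-Wasserstein distance between probability measures $\mathbb{P},\mathbb{P}'$ on $\Xi$ is $W(\mathbb{P},\mathbb{P}'):=\inf_{\pi\in\Pi(\mathbb{P},\mathbb{P}')}\int_{\Xi\times\Xi}\|\xi-\xi'\|\,\pi(d\xi,d\xi')$, where $\Pi(\mathbb{P},\mathbb{P}')$ is the set of couplings with marginals $\mathbb{P}$ and $\mathbb{P}'$. $[N]=\{1,\dots,N\}$. *)

theory Defs
  imports "HOL-Probability.Probability"
begin

definition is_norm :: "('a::real_vector \<Rightarrow> real) \<Rightarrow> bool" where
  "is_norm nrm \<longleftrightarrow>
     (\<forall>x. nrm x \<ge> 0) \<and> (\<forall>x. nrm x = 0 \<longleftrightarrow> x = 0) \<and>
     (\<forall>c x. nrm (c *\<^sub>R x) = \<bar>c\<bar> * nrm x) \<and>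
     (\<forall>x y. nrm (x + y) \<le> nrm x + nrm y)"

definition polish_subspace :: "'a::topological_space set \<Rightarrow> bool" where
  "polish_subspace S \<longleftrightarrow>
     completely_metrizable_space (top_of_set S) \<and> separable_space (top_of_set S)"

definition couplings :: "'a measure \<Rightarrow> 'b measure \<Rightarrow> ('a \<times> 'b) measure set" where
  "couplings P Q = {\<pi>. sets \<pi> = sets (P \<Otimes>\<^sub>M Q) \<and> prob_space \<pi> \<and>
                        distr \<pi> P fst = P \<and> distr \<pi> Q snd = Q}"

definition wasserstein1 :: "('a::real_vector \<Rightarrow> real) \<Rightarrow> 'a measure \<Rightarrow> 'a measure \<Rightarrow> ennreal" where
  "wasserstein1 nrm P Q =
     (INF \<pi>\<in>couplings P Q. \<integral>\<^sup>+ z. ennreal (nrm (fst z - snd z)) \<partial>\<pi>)"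

definition uball :: "('a::real_vector \<Rightarrow> real) \<Rightarrow> 'a set \<Rightarrow> real \<Rightarrow> 'a \<Rightarrow> 'a set" where
  "uball nrm \<Xi> r c = {u\<in>\<Xi>. nrm (u - c) \<le> r}"

end

theory Submission
  imports Defs
begin

(*
  Let \<pi> be any coupling of the laws of \<xi> i and \<xi> (N + 1).  If the robust constraint
  holds at the first point of a pair but g x is positive at the second, the two points
  are more than r i apart, since otherwise the second would lie in the ball around the
  first.  By Markov's inequality this has \<pi>-probability at most the transport cost of
  \<pi> divided by r i, and the infimum over all couplings gives \<rho> (N + 1 - i) / r i.
  The Borel set of close pairs with a violating second point may have a non-measurable
  first projection; inner regularity of \<pi> by compact sets circumvents this.
*)

lemma is_norm_minus_commute:
  assumes "is_norm nrm"
  shows "nrm (a - b) = nrm (b - a)"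
proof -
  have "nrm ((-1) *\<^sub>R (a - b)) = \<bar>-1\<bar> * nrm (a - b)"
    using assms unfolding is_norm_def by blast
  then show ?thesis by simp
qed

lemma is_norm_convex_on:
  assumes "is_norm nrm"
  shows "convex_on UNIV nrm"
proof (rule convex_onI)
  fix t :: real and x y assume t: "0 < t" "t < 1"
  have "nrm ((1 - t) *\<^sub>R x + t *\<^sub>R y) \<le> nrm ((1 - t) *\<^sub>R x) + nrm (t *\<^sub>R y)"
    using assms unfolding is_norm_def by blast
  also have "\<dots> = (1 - t) * nrm x + t * nrm y"
    using assms t unfolding is_norm_def by simp
  finally show "nrm ((1 - t) *\<^sub>R x + t *\<^sub>R y) \<le> (1 - t) * nrm x + t * nrm y" .
qed simp

lemma is_norm_continuous_on:
  fixes nrm :: "'a::euclidean_space \<Rightarrow> real"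
  assumes "is_norm nrm"
  shows "continuous_on UNIV nrm"
  using convex_on_continuous[OF open_UNIV is_norm_convex_on[OF assms]] .

lemma polish_subspace_imp_borel:
  fixes S :: "'a::metric_space set"
  assumes "polish_subspace S"
  shows "S \<in> sets borel"
proof -
  have "gdelta_in euclidean S"
    by (rule completely_metrizable_space_imp_gdelta_in)
       (use assms metrizable_space_euclidean in \<open>auto simp: polish_subspace_def\<close>)
  then obtain U where U: "countable U" "\<And>u. u \<in> U \<Longrightarrow> open u" "\<Inter>U = S"
    by (auto simp: gdelta_in_alt intersection_of_def)
  have "(\<Inter>u\<in>U. u) \<in> sets borel"
    by (rule sets.countable_INT'') (use U in auto)
  with U show ?thesis by simp
qed

lemma couplings_sets_borel:
  fixes P :: "'a::second_countable_topology measure" and Q :: "'b::second_countable_topology measure"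
  assumes "\<pi> \<in> couplings P Q" "sets P = sets borel" "sets Q = sets borel"
  shows "sets \<pi> = sets (borel :: ('a \<times> 'b) measure)"
proof -
  have "sets \<pi> = sets (P \<Otimes>\<^sub>M Q)" using assms(1) by (simp add: couplings_def)
  also have "\<dots> = sets (borel \<Otimes>\<^sub>M borel)" by (rule sets_pair_measure_cong) (use assms in simp_all)
  finally show ?thesis unfolding borel_prod .
qed

lemma couplings_emeasure_fst:
  assumes "\<pi> \<in> couplings P Q" "S \<in> sets P"
  shows "emeasure \<pi> (fst -` S \<inter> space \<pi>) = emeasure P S"
proof -
  have "fst \<in> measurable \<pi> P"
    using assms(1) measurable_fst by (auto simp: couplings_def cong: measurable_cong_sets)
  then have "emeasure (distr \<pi> P fst) S = emeasure \<pi> (fst -` S \<inter> space \<pi>)"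
    using assms(2) by (rule emeasure_distr)
  then show ?thesis using assms(1) by (simp add: couplings_def)
qed

lemma couplings_emeasure_snd:
  assumes "\<pi> \<in> couplings P Q" "S \<in> sets Q"
  shows "emeasure \<pi> (snd -` S \<inter> space \<pi>) = emeasure Q S"
proof -
  have "snd \<in> measurable \<pi> Q"
    using assms(1) measurable_snd by (auto simp: couplings_def cong: measurable_cong_sets)
  then have "emeasure (distr \<pi> Q snd) S = emeasure \<pi> (snd -` S \<inter> space \<pi>)"
    using assms(2) by (rule emeasure_distr)
  then show ?thesis using assms(1) by (simp add: couplings_def)
qed

lemma couplings_measure_distr_snd_le:
  fixes Y :: "'w \<Rightarrow> 'b::topological_space"
  assumes "\<pi> \<in> couplings P (distr M borel Y)" "Y \<in> borel_measurable M" "S \<in> sets borel"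
    and "C \<in> sets \<pi>" "snd -` S \<subseteq> C"
  shows "measure M (Y -` S \<inter> space M) \<le> measure \<pi> C"
proof -
  interpret prob_space \<pi> using assms(1) by (simp add: couplings_def)
  have "snd \<in> measurable \<pi> (distr M borel Y)"
    using assms(1) measurable_snd by (auto simp: couplings_def cong: measurable_cong_sets)
  then have "snd -` S \<inter> space \<pi> \<in> sets \<pi>"
    using assms(3) by (simp add: measurable_sets)
  then have "measure \<pi> (snd -` S \<inter> space \<pi>) \<le> measure \<pi> C"
    using assms(4,5) by (intro finite_measure_mono) auto
  moreover have "measure \<pi> (snd -` S \<inter> space \<pi>) = measure M (Y -` S \<inter> space M)"
    using couplings_emeasure_snd[OF assms(1)] assms(2,3) by (simp add: measure_def emeasure_distr)
  ultimately show ?thesis by simp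
qed

lemma is_norm_dist_borel_measurable:
  fixes nrm :: "'a::euclidean_space \<Rightarrow> real"
  assumes "is_norm nrm"
  shows "(\<lambda>z. nrm (fst z - snd z)) \<in> borel_measurable borel"
  by (rule borel_measurable_continuous_onI,
      rule continuous_on_compose2[OF is_norm_continuous_on[OF assms]])
     (auto intro!: continuous_intros)

lemma couplings_emeasure_le_compl:
  fixes X :: "'w \<Rightarrow> 'a::{complete_space, second_countable_topology}"
    and Q :: "'b::{complete_space, second_countable_topology} measure"
  assumes "X \<in> borel_measurable M" "\<pi> \<in> couplings (distr M borel X) Q" "sets Q = sets borel"
    and "H \<in> sets borel" "A \<in> sets M"
    and disjoint: "\<And>\<omega> z. \<omega> \<in> A \<Longrightarrow> z \<in> H \<Longrightarrow> X \<omega> \<noteq> fst z"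
  shows "emeasure \<pi> H \<le> emeasure M (space M - A)"
proof -
  have sets_\<pi>: "sets \<pi> = sets borel"
    using couplings_sets_borel[OF assms(2) _ assms(3)] by simp
  then have space_\<pi>: "space \<pi> = UNIV"
    by (metis sets_eq_imp_space_eq space_borel)
  interpret prob_space \<pi> using assms(2) by (simp add: couplings_def)
  have "emeasure \<pi> H = (SUP K \<in> {K. K \<subseteq> H \<and> compact K}. emeasure \<pi> K)"
    using sets_\<pi> assms(4) by (intro inner_regular) simp_all
  also have "\<dots> \<le> emeasure M (space M - A)"
  proof (rule SUP_least, clarify)
    fix K assume "K \<subseteq> H" "compact K"
    then have closed_K: "closed (fst ` K)"
      by (intro compact_imp_closed compact_continuous_image continuous_intros)
    then have "fst ` K \<in> sets borel" by simp
    moreover have "X -` fst ` K \<inter> space M \<subseteq> space M - A"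
      using \<open>K \<subseteq> H\<close> disjoint by fastforce
    ultimately have "emeasure \<pi> (fst -` fst ` K \<inter> space \<pi>) \<le> emeasure M (space M - A)"
      using assms(1,5) couplings_emeasure_fst[OF assms(2)]
      by (simp add: emeasure_distr emeasure_mono)
    moreover have "emeasure \<pi> K \<le> emeasure \<pi> (fst -` fst ` K \<inter> space \<pi>)"
      using closed_K continuous_closed_vimage[of "fst ` K" fst]
      by (intro emeasure_mono) (auto simp: space_\<pi> sets_\<pi> intro: borel_closed continuous_intros)
    ultimately show "emeasure \<pi> K \<le> emeasure M (space M - A)" by simp
  qed
  finally show ?thesis .
qed

lemma measure_robust_event_le_coupling:
  fixes X Y :: "'w \<Rightarrow> 'a::euclidean_space" and h :: "'a \<Rightarrow> real"
  assumes "prob_space M" "is_norm nrm" "\<Xi> \<in> sets borel"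
    and X: "X \<in> borel_measurable M" and Y: "Y \<in> borel_measurable M"
    and Y_in: "\<And>\<omega>. \<omega> \<in> space M \<Longrightarrow> Y \<omega> \<in> \<Xi>"
    and h: "h \<in> borel_measurable borel"
    and \<pi>: "\<pi> \<in> couplings (distr M borel X) (distr M borel Y)"
  shows "measure M {\<omega>\<in>space M. \<forall>u\<in>uball nrm \<Xi> r (X \<omega>). h u \<le> 0}
    \<le> measure M {\<omega>\<in>space M. h (Y \<omega>) \<le> 0} + measure \<pi> {z. r < nrm (fst z - snd z)}"
proof -
  interpret prob_space M by fact
  interpret pi: prob_space \<pi> using \<pi> by (simp add: couplings_def)
  define A where "A = {\<omega>\<in>space M. \<forall>u\<in>uball nrm \<Xi> r (X \<omega>). h u \<le> 0}"
  define B where "B = {\<omega>\<in>space M. h (Y \<omega>) \<le> 0}"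
  define F where "F = {z. r < nrm (fst z - snd z)}"
  define H where "H = {z. snd z \<in> \<Xi> \<and> 0 < h (snd z) \<and> nrm (fst z - snd z) \<le> r}"
  have sets_\<pi>: "sets \<pi> = sets borel"
    using couplings_sets_borel[OF \<pi>] by simp
  note [measurable] = \<open>\<Xi> \<in> sets borel\<close> h
    is_norm_dist_borel_measurable[OF \<open>is_norm nrm\<close>, unfolded borel_prod [symmetric]]
  have "Measurable.pred (borel \<Otimes>\<^sub>M borel) (\<lambda>z. r < nrm (fst z - snd z))"
    "Measurable.pred (borel \<Otimes>\<^sub>M borel)
       (\<lambda>z. snd z \<in> \<Xi> \<and> 0 < h (snd z) \<and> nrm (fst z - snd z) \<le> r)"
    by measurable
  then have sets: "F \<in> sets \<pi>" "H \<in> sets \<pi>"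
    unfolding pred_def sets_\<pi> borel_prod F_def H_def by simp_all
  show ?thesis
  proof (cases "A \<in> sets M")
    case False
    then show ?thesis by (simp add: A_def [symmetric] measure_notin_sets)
  next
    case True
    have "\<omega> \<notin> A" if "z \<in> H" "X \<omega> = fst z" for \<omega> z
      using that is_norm_minus_commute[OF \<open>is_norm nrm\<close>, of "fst z" "snd z"]
      by (auto simp: A_def H_def uball_def)
    then have "emeasure \<pi> H \<le> emeasure M (space M - A)"
      using sets(2) True by (intro couplings_emeasure_le_compl[OF X \<pi>]) (auto simp: sets_\<pi>)
    then have H_le: "measure \<pi> H \<le> 1 - measure M A"
      using True by (simp add: pi.emeasure_eq_measure emeasure_eq_measure prob_compl)
    have "Y -` {b \<in> \<Xi>. 0 < h b} \<inter> space M = space M - B"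
      using Y_in by (auto simp: B_def)
    moreover have "B \<in> sets M"
      unfolding B_def by measurable (use Y in simp)
    moreover have "measure M (Y -` {b \<in> \<Xi>. 0 < h b} \<inter> space M) \<le> measure \<pi> (H \<union> F)"
      using sets by (intro couplings_measure_distr_snd_le[OF \<pi> Y]) (auto simp: H_def F_def)
    ultimately have "1 - measure M B \<le> measure \<pi> H + measure \<pi> F"
      using measure_Un_le[OF sets(2,1)] by (simp add: prob_compl)
    with H_le show ?thesis
      unfolding A_def B_def F_def by linarith
  qed
qed

lemma measure_robust_event_le_wasserstein1:
  fixes X Y :: "'w \<Rightarrow> 'a::euclidean_space" and h :: "'a \<Rightarrow> real"
  assumes "prob_space M" "is_norm nrm" "\<Xi> \<in> sets borel"
    and "X \<in> borel_measurable M" "Y \<in> borel_measurable M"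
    and "\<And>\<omega>. \<omega> \<in> space M \<Longrightarrow> Y \<omega> \<in> \<Xi>"
    and "h \<in> borel_measurable borel"
    and W: "wasserstein1 nrm (distr M borel X) (distr M borel Y) \<le> ennreal \<rho>"
    and "\<rho> \<ge> 0" "r > 0"
  shows "measure M {\<omega>\<in>space M. \<forall>u\<in>uball nrm \<Xi> r (X \<omega>). h u \<le> 0}
    \<le> measure M {\<omega>\<in>space M. h (Y \<omega>) \<le> 0} + \<rho> / r"
proof -
  define \<delta> where "\<delta> = measure M {\<omega>\<in>space M. \<forall>u\<in>uball nrm \<Xi> r (X \<omega>). h u \<le> 0}
    - measure M {\<omega>\<in>space M. h (Y \<omega>) \<le> 0}"
  define F where "F = {z. r < nrm (fst z - snd z)}"
  have "ennreal (r * \<delta>) \<le> wasserstein1 nrm (distr M borel X) (distr M borel Y)"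
    unfolding wasserstein1_def
  proof (rule INF_greatest)
    fix \<pi> assume \<pi>: "\<pi> \<in> couplings (distr M borel X) (distr M borel Y)"
    interpret prob_space \<pi> using \<pi> by (simp add: couplings_def)
    have "F \<in> sets \<pi>"
      using couplings_sets_borel[OF \<pi>] is_norm_dist_borel_measurable[OF \<open>is_norm nrm\<close>]
      unfolding F_def by (simp add: pred_def)
    have "r * \<delta> \<le> r * measure \<pi> F"
      using measure_robust_event_le_coupling[OF assms(1-7) \<pi>, of r] \<open>r > 0\<close>
      unfolding \<delta>_def F_def by simp
    then have "ennreal (r * \<delta>) \<le> ennreal (r * measure \<pi> F)"
      by (rule ennreal_leI)
    also have "\<dots> = ennreal r * emeasure \<pi> F"
      using \<open>r > 0\<close> by (simp add: emeasure_eq_measure ennreal_mult)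
    also have "\<dots> = (\<integral>\<^sup>+ z. ennreal r * indicator F z \<partial>\<pi>)"
      using \<open>F \<in> sets \<pi>\<close> by (simp add: nn_integral_cmult_indicator)
    also have "\<dots> \<le> (\<integral>\<^sup>+ z. ennreal (nrm (fst z - snd z)) \<partial>\<pi>)"
      by (intro nn_integral_mono) (auto simp: F_def indicator_def intro: ennreal_leI)
    finally show "ennreal (r * \<delta>) \<le> (\<integral>\<^sup>+ z. ennreal (nrm (fst z - snd z)) \<partial>\<pi>)" .
  qed
  with W have "r * \<delta> \<le> \<rho>"
    using \<open>\<rho> \<ge> 0\<close> ennreal_le_iff by (metis order.trans)
  with \<open>r > 0\<close> show ?thesis
    unfolding \<delta>_def by (simp add: field_simps)
qed

theorem lemma1:
  fixes M :: "'w measure"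
    and \<Xi> :: "(real^'d) set"
    and nrm :: "real^'d \<Rightarrow> real"
    and \<xi> :: "nat \<Rightarrow> 'w \<Rightarrow> real^'d"
    and \<rho> :: "real \<Rightarrow> real"
    and \<X> :: "(real^'n) set"
    and g :: "real^'n \<Rightarrow> real^'d \<Rightarrow> real"
    and N :: nat
    and r :: "nat \<Rightarrow> real"
  assumes "prob_space M"
    and "polish_subspace \<Xi>"
    and "is_norm nrm"
    and "\<And>i. i \<ge> 1 \<Longrightarrow> \<xi> i \<in> borel_measurable M"
    and "\<And>i \<omega>. i \<ge> 1 \<Longrightarrow> \<omega> \<in> space M \<Longrightarrow> \<xi> i \<omega> \<in> \<Xi>"
    and "prob_space.indep_vars M (\<lambda>_. borel) \<xi> {1..}"
    and "\<And>t. t \<ge> 0 \<Longrightarrow> \<rho> t \<ge> 0"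
    and "\<rho> 0 = 0"
    and "\<And>i k. i \<ge> 1 \<Longrightarrow>
           wasserstein1 nrm (distr M borel (\<xi> i)) (distr M borel (\<xi> (i + k))) \<le> ennreal (\<rho> (real k))"
    and "\<And>x. g x \<in> borel_measurable borel"
    and "N \<ge> 1"
    and "\<And>i. i \<in> {1..N} \<Longrightarrow> r i > 0"
  shows "\<forall>x\<in>\<X>. \<forall>i\<in>{1..N}.
           measure M {\<omega>\<in>space M. \<forall>u\<in>uball nrm \<Xi> (r i) (\<xi> i \<omega>). g x u \<le> 0}
           \<le> measure M {\<omega>\<in>space M. g x (\<xi> (N + 1) \<omega>) \<le> 0} + \<rho> (real (N + 1 - i)) / r i"
proof (intro ballI)
  fix x i assume i: "i \<in> {1..N}"
  have \<xi>: "\<xi> i \<in> borel_measurable M" "\<xi> (N + 1) \<in> borel_measurable M"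
    using i assms(4) by auto
  have "N + 1 = i + (N + 1 - i)" using i by simp
  then have W: "wasserstein1 nrm (distr M borel (\<xi> i)) (distr M borel (\<xi> (N + 1)))
      \<le> ennreal (\<rho> (real (N + 1 - i)))"
    using assms(9)[of i "N + 1 - i"] i by simp
  show "measure M {\<omega>\<in>space M. \<forall>u\<in>uball nrm \<Xi> (r i) (\<xi> i \<omega>). g x u \<le> 0}
      \<le> measure M {\<omega>\<in>space M. g x (\<xi> (N + 1) \<omega>) \<le> 0} + \<rho> (real (N + 1 - i)) / r i"
    using i assms(5)[of "N + 1"] assms(7)[of "real (N + 1 - i)"] assms(12)[of i]
    by (intro measure_robust_event_le_wasserstein1[OF assms(1,3)
          polish_subspace_imp_borel[OF assms(2)] \<xi> _ assms(10) W]) auto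
qed

end
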